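(* Let $\mathcal{X}\subset\mathbb{R}^D$ be compact, let $\mathcal{Y}$ be a mark space and $\Theta$ a parameter space. Consider a Neyman-Scott process with gamma weights: latent events $\{(m_l,w_l,\theta_l)\}_{l=1}^L$ are drawn from a Poisson process on $\mathcal{X}\times\mathbb{R}_+\times\Theta$ with intensity $\nu(m,w,\theta)=\overline{L}(\mathcal{X})\,\mathrm{Ga}(w\mid\alpha,\beta)\,p(m,\theta)$, where $\overline{L}(\mathcal{X})>0$, $\alpha,\beta>0$ and $p(m,\theta)$ is a probability density (so $L\sim\mathrm{Po}(\overline{L}(\mathcal{X}))$); given the latent events, observed points $\{(x_n,y_n)\}_{n=1}^N$ are drawn from a Poisson process on $\mathcal{X}\times\mathcal{Y}$ with intensity $\sum_{l=1}^L w_l\,p(x,y\mid m_l,\theta_l)$, each $p(\cdot,\cdot\mid m,\theta)$ being a probability density. Label the observed points $1,\dots,N$ in uniformly random order and let $\mathcal{C}$ be the partition of $[N]=\{1,\dots,N\}$ into nonempty blocks grouping points with the same parent latent event. Then, integrating over the latent event locations, weights and parameters, the joint probability of the (random) number of points $N$ and the partition $\mathcal{C}$ is $$p(N,\mathcal{C})=V_{N,|\mathcal{C}|}\prod_{\mathcal{C}_k\in\mathcal{C}}\frac{\Gamma(|\mathcal{C}_k|+\alpha)}{\Gamma(\alpha)},$$ where $|\mathcal{C}|$ is the number of blocks, $|\mathcal{C}_k|$ the size of block $\mathcal{C}_k$, $N=\sum_k|\mathcal{C}_k|$, and $$V_{N,|\mathcal{C}|}=\frac{1}{N!}\left(\frac{1}{1+\beta}\right)^N\sum_{L=|\mathcal{C}|}^\infty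 \mathrm{Po}(L\mid\overline{L}(\mathcal{X}))\,\frac{L!}{(L-|\mathcal{C}|)!}\left(\frac{\beta}{1+\beta}\right)^{L\alpha}.$$
   Context: $\mathrm{Ga}(w\mid\alpha,\beta)$ is the gamma density with shape $\alpha$ and rate $\beta$; $\mathrm{Po}(L\mid\mu)$ is the Poisson pmf with mean $\mu$. The parent of an observed point is the latent event whose impulse response generated it (by Poisson superposition, the observed process is the union of independent Poisson processes with intensities $w_l\,p(x,y\mid m_l,\theta_l)$). *)

theory Defs
  imports "HOL-Analysis.Analysis" "HOL-Probability.Probability" "HOL-Library.Disjoint_Sets"
begin

definition gamma_dens :: "real \<Rightarrow> real \<Rightarrow> real \<Rightarrow> real" where
  "gamma_dens a b w = (if 0 < w then b powr a * w powr (a - 1) * exp (- b * w) / Gamma a else 0)"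

definition Po :: "nat \<Rightarrow> real \<Rightarrow> real" where
  "Po k mu = exp (- mu) * mu ^ k / fact k"

definition po_pmf :: "real \<Rightarrow> nat pmf" where
  "po_pmf mu = (if 0 < mu then poisson_pmf mu else return_pmf 0)"

definition parent_list :: "nat \<Rightarrow> (nat \<Rightarrow> nat) \<Rightarrow> nat list" where
  "parent_list L n = concat (map (\<lambda>l. replicate (n l) l) [0..<L])"

definition parent_partition :: "nat \<Rightarrow> nat \<Rightarrow> (nat \<Rightarrow> nat) \<Rightarrow> nat set set" where
  "parent_partition L N par = {{i \<in> {1..N}. par i = l} | l. l < L} - {{}}"

text \<open>Given L latent events with weights w l and children-intensity masses I l
  (the integral of the child density over the observation window), the observed
  points form the superposition of independent Poisson processes; latent event l
  has Po(w l * I l) children. The observed points are then labelled 1..N in a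
  uniformly random order (sigma is a uniform random permutation of {0..<N}; label
  i+1 is given to the (sigma i)-th point of the parent list).\<close>
definition NC_given_latent :: "nat \<Rightarrow> (nat \<Rightarrow> real) \<Rightarrow> (nat \<Rightarrow> real) \<Rightarrow> (nat \<times> nat set set) pmf" where
  "NC_given_latent L w I =
     do { n \<leftarrow> Pi_pmf {..<L} 0 (\<lambda>l. po_pmf (w l * I l));
          let ps = parent_list L n;
          let N = length ps;
          \<sigma> \<leftarrow> pmf_of_set {\<sigma>. \<sigma> permutes {..<N}};
          return_pmf (N, parent_partition L N (\<lambda>i. ps ! \<sigma> (i - 1))) }"

text \<open>Distribution of a single latent event (m, w, theta): the normalised latent
  intensity nu / Lbar = Ga(w | alpha, beta) p(m, theta) on X x R+ x Theta.\<close>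
definition latent_measure ::
  "'a::euclidean_space set \<Rightarrow> 't measure \<Rightarrow> real \<Rightarrow> real \<Rightarrow> ('a \<Rightarrow> 't \<Rightarrow> real) \<Rightarrow> ('a \<times> real \<times> 't) measure" where
  "latent_measure X M\<Theta> \<alpha> \<beta> pmt =
     density (restrict_space lborel X \<Otimes>\<^sub>M (lborel \<Otimes>\<^sub>M M\<Theta>))
       (\<lambda>(m, w, \<theta>). ennreal (gamma_dens \<alpha> \<beta> w * pmt m \<theta>))"

text \<open>Joint probability p(N, C) for the Neyman-Scott process: L ~ Po(Lbar), latent
  events i.i.d. from latent_measure (this is the Poisson process with intensity nu),
  and the children mass of latent (m, theta) is the integral of p(x, y | m, theta)
  over X x Y.\<close>
definition NS_prob ::
  "'a::euclidean_space set \<Rightarrow> 'y measure \<Rightarrow> 't measure \<Rightarrow> real \<Rightarrow> real \<Rightarrow> real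
   \<Rightarrow> ('a \<Rightarrow> 't \<Rightarrow> real) \<Rightarrow> ('a \<times> 'y \<Rightarrow> 'a \<Rightarrow> 't \<Rightarrow> real) \<Rightarrow> nat \<Rightarrow> nat set set \<Rightarrow> real" where
  "NS_prob X MY M\<Theta> Lbar \<alpha> \<beta> pmt pxy N C =
     (\<Sum>L. Po L Lbar *
        (\<integral>z. pmf (NC_given_latent L (\<lambda>l. fst (snd (z l)))
                     (\<lambda>l. enn2real (\<integral>\<^sup>+ xy. ennreal (pxy xy (fst (z l)) (snd (snd (z l))))
                                         \<partial>(restrict_space lborel X \<Otimes>\<^sub>M MY))))
                  (N, C)
           \<partial>(PiM {..<L} (\<lambda>_. latent_measure X M\<Theta> \<alpha> \<beta> pmt))))"

end

theory Submission
  imports Defs "HOL-Combinatorics.Multiset_Permutations"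
begin

text \<open>
  Given L latent events with weights w_l, each child density integrates to 1 over the window, so
  latent event l has Po(w_l) children; after the uniformly random relabelling, the word ys of
  parents (label i has parent ys ! (i - 1)) has probability prod_l exp (- w_l) w_l^(c_l) / N!,
  where c_l counts the occurrences of l in ys. The words inducing the partition C are in bijection
  with the injective labellings of the blocks of C by latent events, so there are L! / (L - |C|)!
  of them, and in each of them the nonzero counts are the block sizes. The weights are i.i.d.
  Ga(\<alpha>, \<beta>), and integrating exp (- w) w^c against Ga(w | \<alpha>, \<beta>) gives
  (\<beta> / (1 + \<beta>))^\<alpha> (1 + \<beta>)^(- c) Gamma(c + \<alpha>) / Gamma(\<alpha>), independently
  for the L latent events. Averaging over L ~ Po(Lbar) gives the formula.
\<close>

section \<open>Uniformly relabelled parent words\<close>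

lemma count_mset_parent_list:
  "count (mset (parent_list L n)) l = (if l < L then n l else 0)"
  by (induction L) (auto simp: parent_list_def)

lemma set_parent_list: "set (parent_list L n) \<subseteq> {..<L}"
  unfolding parent_list_def by auto

lemma card_permute_list_fibre:
  assumes "mset ys = mset xs"
  shows "card {\<sigma>. \<sigma> permutes {..<length xs} \<and> permute_list \<sigma> xs = ys}
       = card {\<sigma>. \<sigma> permutes {..<length xs} \<and> permute_list \<sigma> xs = xs}"
proof -
  obtain p where p: "p permutes {..<length xs}" "permute_list p xs = ys"
    using mset_eq_permutation[OF assms] by metis
  have p_inv: "inv p permutes {..<length xs}"
    using p(1) by (rule permutes_inv)
  have undo_p: "permute_list (\<tau> \<circ> inv p) xs = xs" if "permute_list \<tau> xs = ys" for \<tau>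
  proof -
    have "permute_list (\<tau> \<circ> inv p) xs = permute_list (inv p) (permute_list p xs)"
      using p_inv that p(2) by (simp add: permute_list_compose)
    also have "\<dots> = permute_list (p \<circ> inv p) xs"
      using p_inv by (simp add: permute_list_compose)
    finally show ?thesis
      using permutes_inv_o(1)[OF p(1)] by (simp add: id_def)
  qed
  have "bij_betw (\<lambda>\<tau>. \<tau> \<circ> p)
      {\<sigma>. \<sigma> permutes {..<length xs} \<and> permute_list \<sigma> xs = xs}
      {\<sigma>. \<sigma> permutes {..<length xs} \<and> permute_list \<sigma> xs = ys}"
  proof (rule bij_betw_byWitness[where f' = "\<lambda>\<tau>. \<tau> \<circ> inv p"])
    show "\<forall>\<tau>\<in>{\<sigma>. \<sigma> permutes {..<length xs} \<and> permute_list \<sigma> xs = xs}. \<tau> \<circ> p \<circ> inv p = \<tau>"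
      using p(1) by (auto simp: fun_eq_iff permutes_inverses(1))
    show "\<forall>\<tau>\<in>{\<sigma>. \<sigma> permutes {..<length xs} \<and> permute_list \<sigma> xs = ys}. \<tau> \<circ> inv p \<circ> p = \<tau>"
      using p(1) by (auto simp: fun_eq_iff permutes_inverses(2))
  qed (use p p_inv undo_p in \<open>auto simp: permute_list_compose permutes_compose\<close>)
  then show ?thesis
    by (rule bij_betw_same_card[symmetric])
qed

lemma card_permutes_eq_mult_fibre:
  "card {\<sigma>. \<sigma> permutes {..<length xs}}
     = card (permutations_of_multiset (mset xs))
       * card {\<sigma>. \<sigma> permutes {..<length xs} \<and> permute_list \<sigma> xs = xs}"
proof -
  define A where "A = permutations_of_multiset (mset xs)"
  define F where "F ys = {\<sigma>. \<sigma> permutes {..<length xs} \<and> permute_list \<sigma> xs = ys}" for ys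
  have "{\<sigma>. \<sigma> permutes {..<length xs}} = (\<Union>ys\<in>A. F ys)"
    by (auto simp: F_def A_def permutations_of_multiset_def)
  then have "card {\<sigma>. \<sigma> permutes {..<length xs}} = card (\<Union>ys\<in>A. F ys)"
    by simp
  also have "\<dots> = (\<Sum>ys\<in>A. card (F ys))"
    by (intro card_UN_disjoint) (auto simp: A_def F_def finite_permutations)
  also have "\<dots> = (\<Sum>ys\<in>A. card (F xs))"
    using card_permute_list_fibre
    by (intro sum.cong refl) (simp add: A_def F_def permutations_of_multiset_def)
  finally show ?thesis
    by (simp add: A_def F_def)
qed

lemma map_pmf_permute_list_uniform:
  "map_pmf (\<lambda>\<sigma>. permute_list \<sigma> xs) (pmf_of_set {\<sigma>. \<sigma> permutes {..<length xs}})
     = pmf_of_set (permutations_of_multiset (mset xs))"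
proof (rule pmf_eqI)
  fix ys
  define P where "P = {\<sigma>. \<sigma> permutes {..<length xs}}"
  define A where "A = permutations_of_multiset (mset xs)"
  define F where "F ys = {\<sigma>. \<sigma> permutes {..<length xs} \<and> permute_list \<sigma> xs = ys}" for ys
  have P: "finite P" "P \<noteq> {}"
    unfolding P_def by (auto simp: finite_permutations intro: permutes_id)
  have "P \<inter> (\<lambda>\<sigma>. permute_list \<sigma> xs) -` {ys} = F ys"
    by (auto simp: F_def P_def)
  then have "pmf (map_pmf (\<lambda>\<sigma>. permute_list \<sigma> xs) (pmf_of_set P)) ys = card (F ys) / card P"
    using P by (simp add: pmf_map measure_pmf_of_set)
  also have "\<dots> = indicator A ys / card A"
  proof (cases "ys \<in> A")
    case True
    have "card (F ys) = card (F xs)" "card P = card A * card (F xs)"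
      using True card_permute_list_fibre[of ys xs] card_permutes_eq_mult_fibre[of xs]
      by (simp_all add: A_def F_def P_def permutations_of_multiset_def)
    moreover have "card P > 0"
      using P by (simp add: card_gt_0_iff)
    ultimately show ?thesis
      using True by simp
  next
    case False
    then have "F ys = {}"
      by (auto simp: F_def A_def permutations_of_multiset_def)
    then show ?thesis
      using False by simp
  qed
  finally show "pmf (map_pmf (\<lambda>\<sigma>. permute_list \<sigma> xs) (pmf_of_set {\<sigma>. \<sigma> permutes {..<length xs}})) ys
      = pmf (pmf_of_set (permutations_of_multiset (mset xs))) ys"
    by (simp add: P_def A_def)
qed

definition word_partition :: "nat \<Rightarrow> nat list \<Rightarrow> nat set set" where
  "word_partition L ys = parent_partition L (length ys) (\<lambda>i. ys ! (i - 1))"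

definition parent_word_pmf :: "nat \<Rightarrow> (nat \<Rightarrow> nat pmf) \<Rightarrow> nat list pmf" where
  "parent_word_pmf L Q =
     do { n \<leftarrow> Pi_pmf {..<L} 0 Q;
          pmf_of_set (permutations_of_multiset (mset (parent_list L n))) }"

lemma uniform_relabelling_eq_map_permutations:
  "do { \<sigma> \<leftarrow> pmf_of_set {\<sigma>. \<sigma> permutes {..<length ps}};
        return_pmf (length ps, parent_partition L (length ps) (\<lambda>i. ps ! \<sigma> (i - 1))) }
   = map_pmf (\<lambda>ys. (length ys, word_partition L ys)) (pmf_of_set (permutations_of_multiset (mset ps)))"
proof -
  let ?P = "{\<sigma>. \<sigma> permutes {..<length ps}}"
  have P: "finite ?P" "?P \<noteq> {}"
    by (auto simp: finite_permutations intro: permutes_id)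
  have relabel: "(length ps, parent_partition L (length ps) (\<lambda>i. ps ! \<sigma> (i - 1)))
      = (length (permute_list \<sigma> ps), word_partition L (permute_list \<sigma> ps))"
    if "\<sigma> permutes {..<length ps}" for \<sigma>
    using permute_list_nth[OF that]
    by (auto simp: word_partition_def parent_partition_def intro!: arg_cong2[where f = "(-)"])
  have "do { \<sigma> \<leftarrow> pmf_of_set ?P;
        return_pmf (length ps, parent_partition L (length ps) (\<lambda>i. ps ! \<sigma> (i - 1))) }
      = map_pmf (\<lambda>\<sigma>. (length ps, parent_partition L (length ps) (\<lambda>i. ps ! \<sigma> (i - 1)))) (pmf_of_set ?P)"
    by (simp add: map_pmf_def)
  also have "\<dots> = map_pmf ((\<lambda>ys. (length ys, word_partition L ys)) \<circ> (\<lambda>\<sigma>. permute_list \<sigma> ps)) (pmf_of_set ?P)"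
    using P relabel by (intro map_pmf_cong) auto
  finally show ?thesis
    by (simp add: pmf.map_comp[symmetric] map_pmf_permute_list_uniform)
qed

lemma NC_given_latent_eq_map_parent_word:
  "NC_given_latent L w I
     = map_pmf (\<lambda>ys. (length ys, word_partition L ys)) (parent_word_pmf L (\<lambda>l. po_pmf (w l * I l)))"
  unfolding NC_given_latent_def parent_word_pmf_def Let_def
    uniform_relabelling_eq_map_permutations map_bind_pmf ..

lemma mset_parent_list_eq_iff:
  assumes "\<And>l. L \<le> l \<Longrightarrow> n l = 0"
  shows "mset (parent_list L n) = mset ys \<longleftrightarrow> set ys \<subseteq> {..<L} \<and> (\<forall>l<L. n l = count (mset ys) l)"
proof
  assume eq: "mset (parent_list L n) = mset ys"
  then have "set ys \<subseteq> {..<L}"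
    using set_parent_list by (metis set_mset_mset)
  with eq show "set ys \<subseteq> {..<L} \<and> (\<forall>l<L. n l = count (mset ys) l)"
    by (metis count_mset_parent_list)
next
  assume ys: "set ys \<subseteq> {..<L} \<and> (\<forall>l<L. n l = count (mset ys) l)"
  show "mset (parent_list L n) = mset ys"
  proof (rule multiset_eqI)
    fix l
    show "count (mset (parent_list L n)) l = count (mset ys) l"
      using ys by (cases "l < L") (auto simp: count_mset_parent_list)
  qed
qed

lemma real_card_permutations_of_mset:
  fixes ys :: "nat list"
  assumes "set ys \<subseteq> {..<L}"
  shows "real (card (permutations_of_multiset (mset ys)))
       = fact (length ys) / (\<Prod>l<L. fact (count (mset ys) l))"
proof -
  have "fact (count (mset ys) l) = (1 :: nat)" if "l \<notin> set ys" for l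
  proof -
    have "count (mset ys) l = 0"
      using that by simp
    then show ?thesis
      by (simp only: fact_0)
  qed
  then have "(\<Prod>l\<in>set_mset (mset ys). fact (count (mset ys) l)) = (\<Prod>l<L. fact (count (mset ys) l) :: nat)"
    using assms by (intro prod.mono_neutral_left) auto
  then have "card (permutations_of_multiset (mset ys)) * (\<Prod>l<L. fact (count (mset ys) l)) = (fact (length ys) :: nat)"
    using card_permutations_of_multiset_aux[of "mset ys"] by simp
  then have "real (card (permutations_of_multiset (mset ys))) * (\<Prod>l<L. fact (count (mset ys) l)) = fact (length ys)"
    using arg_cong[of _ _ real] by fastforce
  then show ?thesis
    by (simp add: field_simps)
qed

lemma pmf_parent_word_pmf:
  assumes ys: "set ys \<subseteq> {..<L}"
  shows "pmf (parent_word_pmf L Q) ys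
       = (\<Prod>l<L. pmf (Q l) (count (mset ys) l) * fact (count (mset ys) l)) / fact (length ys)"
proof -
  define c where "c l = (if l < L then count (mset ys) l else 0)" for l
  let ?A = "permutations_of_multiset (mset ys)"
  have word_iff: "ys \<in> permutations_of_multiset (mset (parent_list L n)) \<longleftrightarrow> n = c"
    if "n \<in> set_pmf (Pi_pmf {..<L} 0 Q)" for n
  proof -
    have "\<And>l. L \<le> l \<Longrightarrow> n l = 0"
      using that set_Pi_pmf_subset[of "{..<L}" 0 Q] by auto
    then show ?thesis
      using ys mset_parent_list_eq_iff[of L n ys]
      by (auto simp: permutations_of_multiset_def c_def fun_eq_iff)
  qed
  have mset_c: "mset (parent_list L c) = mset ys"
    using ys mset_parent_list_eq_iff[of L c ys] by (simp add: c_def)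
  have "pmf (parent_word_pmf L Q) ys
      = (\<integral>n. pmf (pmf_of_set (permutations_of_multiset (mset (parent_list L n)))) ys
           \<partial>measure_pmf (Pi_pmf {..<L} 0 Q))"
    unfolding parent_word_pmf_def by (rule pmf_bind)
  also have "\<dots> = (\<integral>n. indicator {c} n / card ?A \<partial>measure_pmf (Pi_pmf {..<L} 0 Q))"
    using word_iff mset_c by (intro integral_cong_AE) (auto simp: AE_measure_pmf_iff indicator_def)
  also have "\<dots> = pmf (Pi_pmf {..<L} 0 Q) c / card ?A"
    by (simp add: measure_pmf_single)
  also have "pmf (Pi_pmf {..<L} 0 Q) c = (\<Prod>l<L. pmf (Q l) (count (mset ys) l))"
    by (subst pmf_Pi') (auto simp: c_def)
  also have "real (card ?A) = fact (length ys) / (\<Prod>l<L. fact (count (mset ys) l))"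
    using ys by (rule real_card_permutations_of_mset)
  finally show ?thesis
    by (simp add: prod.distrib)
qed

definition words_with_partition :: "nat \<Rightarrow> nat \<Rightarrow> nat set set \<Rightarrow> nat list set" where
  "words_with_partition L N C = {ys. length ys = N \<and> set ys \<subseteq> {..<L} \<and> word_partition L ys = C}"

lemma finite_words_with_partition: "finite (words_with_partition L N C)"
  by (rule finite_subset[OF _ finite_lists_length_eq[of "{..<L}" N]]) (auto simp: words_with_partition_def)

lemma pmf_NC_given_latent:
  "pmf (NC_given_latent L w I) (N, C)
     = (\<Sum>ys\<in>words_with_partition L N C.
          \<Prod>l<L. pmf (po_pmf (w l * I l)) (count (mset ys) l) * fact (count (mset ys) l)) / fact N"
proof -
  let ?D = "parent_word_pmf L (\<lambda>l. po_pmf (w l * I l))"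
  let ?W = "words_with_partition L N C"
  have support: "set ys \<subseteq> {..<L}" if "ys \<in> set_pmf ?D" for ys
  proof -
    from that obtain n where "mset ys = mset (parent_list L n)"
      by (auto simp: parent_word_pmf_def dest: permutations_of_multisetD)
    then show ?thesis
      using set_parent_list by (metis set_mset_mset)
  qed
  have "pmf (NC_given_latent L w I) (N, C) = measure ?D ((\<lambda>ys. (length ys, word_partition L ys)) -` {(N, C)})"
    unfolding NC_given_latent_eq_map_parent_word by (rule pmf_map)
  also have "\<dots> = measure ?D ?W"
    using support by (intro measure_eq_AE) (auto simp: AE_measure_pmf_iff words_with_partition_def)
  also have "\<dots> = (\<Sum>ys\<in>?W. pmf ?D ys)"
    by (rule measure_measure_pmf_finite[OF finite_words_with_partition])
  also have "\<dots> = (\<Sum>ys\<in>?W. (\<Prod>l<L. pmf (po_pmf (w l * I l)) (count (mset ys) l) * fact (count (mset ys) l)) / fact N)"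
    by (intro sum.cong refl) (simp add: pmf_parent_word_pmf words_with_partition_def)
  finally show ?thesis
    by (simp add: sum_divide_distrib)
qed

definition poisson_kernel :: "nat \<Rightarrow> real \<Rightarrow> real" where
  "poisson_kernel k w = exp (- max w 0) * max w 0 ^ k"

lemma poisson_kernel_measurable [measurable]: "poisson_kernel k \<in> borel_measurable borel"
  unfolding poisson_kernel_def by measurable

lemma poisson_kernel_nonneg: "0 \<le> poisson_kernel k w"
  by (simp add: poisson_kernel_def)

lemma pmf_po_pmf_mult_fact: "pmf (po_pmf \<mu>) k * fact k = poisson_kernel k \<mu>"
  by (cases "0 < \<mu>") (auto simp: po_pmf_def poisson_kernel_def indicator_def)

lemma pmf_NC_given_latent_unit_mass:
  assumes "\<And>l. l < L \<Longrightarrow> I l = 1"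
  shows "pmf (NC_given_latent L w I) (N, C)
       = (\<Sum>ys\<in>words_with_partition L N C. \<Prod>l<L. poisson_kernel (count (mset ys) l) (w l)) / fact N"
  using assms by (simp add: pmf_NC_given_latent pmf_po_pmf_mult_fact)

section \<open>Words inducing a given partition\<close>

definition word_block :: "nat list \<Rightarrow> nat \<Rightarrow> nat set" where
  "word_block ys l = {i \<in> {1..length ys}. ys ! (i - 1) = l}"

lemma nth_word_block: "i \<in> word_block ys l \<Longrightarrow> ys ! (i - 1) = l"
  by (simp add: word_block_def)

lemma word_partition_eq: "word_partition L ys = {word_block ys l | l. l < L} - {{}}"
  by (simp add: word_partition_def parent_partition_def word_block_def)

lemma card_word_block: "card (word_block ys l) = count (mset ys) l"
proof -
  have "word_block ys l = Suc ` {i. i < length ys \<and> ys ! i = l}"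
  proof (intro set_eqI iffI)
    fix i
    assume "i \<in> word_block ys l"
    then show "i \<in> Suc ` {i. i < length ys \<and> ys ! i = l}"
      by (intro image_eqI[where x = "i - 1"]) (auto simp: word_block_def)
  qed (auto simp: word_block_def)
  then have "card (word_block ys l) = card {i. i < length ys \<and> ys ! i = l}"
    by (simp add: card_image)
  also have "\<dots> = count (mset ys) l"
    by (simp add: count_mset count_list_eq_length_filter length_filter_conv_card eq_commute)
  finally show ?thesis .
qed

lemma sum_count_words_with_partition:
  assumes "ys \<in> words_with_partition L N C"
  shows "(\<Sum>l<L. count (mset ys) l) = N"
  using assms sum_count_set[of ys "{..<L}"] by (simp add: words_with_partition_def count_mset)

lemma block_of_words_with_partition:
  assumes "ys \<in> words_with_partition L N C" "B \<in> C"
  obtains l where "l < L" "B = word_block ys l" "B \<noteq> {}"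
  using assms by (auto simp: words_with_partition_def word_partition_eq)

lemma prod_count_words_with_partition:
  assumes ys: "ys \<in> words_with_partition L N C" and "h 0 = 1"
  shows "(\<Prod>l<L. h (count (mset ys) l)) = (\<Prod>B\<in>C. h (card B))"
proof -
  define S where "S = {l. l < L \<and> word_block ys l \<noteq> {}}"
  have C: "C = word_block ys ` S"
    using ys by (auto simp: words_with_partition_def word_partition_eq S_def)
  have "inj_on (word_block ys) S"
    by (rule inj_onI) (auto simp: S_def word_block_def)
  then have "(\<Prod>B\<in>C. h (card B)) = (\<Prod>l\<in>S. h (count (mset ys) l))"
    by (simp add: C prod.reindex card_word_block)
  also have "\<dots> = (\<Prod>l<L. h (count (mset ys) l))"
    using \<open>h 0 = 1\<close> card_word_block[of ys, symmetric]
    by (intro prod.mono_neutral_left) (auto simp: S_def)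
  finally show ?thesis ..
qed

definition block_labels :: "nat list \<Rightarrow> nat set set \<Rightarrow> nat set \<Rightarrow> nat" where
  "block_labels ys C = restrict (\<lambda>B. ys ! (Min B - 1)) C"

lemma word_block_block_labels:
  assumes ys: "ys \<in> words_with_partition L N C" and B: "B \<in> C"
  shows "block_labels ys C B < L" "word_block ys (block_labels ys C B) = B"
proof -
  obtain l where l: "l < L" "B = word_block ys l" "B \<noteq> {}"
    using block_of_words_with_partition[OF ys B] .
  then have "Min B \<in> B"
    by (intro Min_in) (auto simp: word_block_def)
  then have "block_labels ys C B = l"
    using l(2) B by (simp add: block_labels_def word_block_def)
  then show "block_labels ys C B < L" "word_block ys (block_labels ys C B) = B"
    using l by simp_all
qed

lemma block_labels_injective:
  assumes "ys \<in> words_with_partition L N C"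
  shows "block_labels ys C \<in> {g \<in> C \<rightarrow>\<^sub>E {..<L}. inj_on g C}"
proof -
  have "block_labels ys C \<in> C \<rightarrow>\<^sub>E {..<L}"
    using word_block_block_labels(1)[OF assms] by (auto simp: block_labels_def)
  moreover have "inj_on (block_labels ys C) C"
    by (rule inj_on_inverseI[where g = "word_block ys"]) (rule word_block_block_labels(2)[OF assms])
  ultimately show ?thesis
    by simp
qed

lemma inj_on_block_labels:
  assumes C: "partition_on {1..N} C"
  shows "inj_on (\<lambda>ys. block_labels ys C) (words_with_partition L N C)"
proof (rule inj_onI)
  fix ys zs
  assume ys: "ys \<in> words_with_partition L N C" and zs: "zs \<in> words_with_partition L N C"
    and eq: "block_labels ys C = block_labels zs C"
  show "ys = zs"
  proof (rule nth_equalityI)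
    show "length ys = length zs"
      using ys zs by (simp add: words_with_partition_def)
    fix i
    assume "i < length ys"
    then have "Suc i \<in> {1..N}"
      using ys by (simp add: words_with_partition_def)
    then obtain B where B: "B \<in> C" "Suc i \<in> B"
      using partition_onD1[OF C] by blast
    have "Suc i \<in> word_block ys (block_labels ys C B)" "Suc i \<in> word_block zs (block_labels zs C B)"
      using B word_block_block_labels(2)[OF ys B(1)] word_block_block_labels(2)[OF zs B(1)] by simp_all
    then have "ys ! i = block_labels ys C B" "zs ! i = block_labels zs C B"
      by (auto dest!: nth_word_block)
    then show "ys ! i = zs ! i"
      using eq by simp
  qed
qed

lemma the_block_eq:
  assumes "partition_on A C" "B \<in> C" "i \<in> B"
  shows "(THE B. B \<in> C \<and> i \<in> B) = B"
  using assms by (intro the_equality) (auto simp: partition_on_def disjoint_def)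

definition labelling_word :: "nat \<Rightarrow> nat set set \<Rightarrow> (nat set \<Rightarrow> nat) \<Rightarrow> nat list" where
  "labelling_word N C g = map (\<lambda>i. g (THE B. B \<in> C \<and> Suc i \<in> B)) [0..<N]"

lemma length_labelling_word [simp]: "length (labelling_word N C g) = N"
  by (simp add: labelling_word_def)

lemma nth_labelling_word:
  assumes C: "partition_on {1..N} C" and "B \<in> C" "i \<in> B"
  shows "labelling_word N C g ! (i - 1) = g B"
proof -
  have "i \<in> {1..N}"
    using partition_onD1[OF C] assms(2,3) by blast
  then have "i - 1 < N" "Suc (i - 1) = i"
    by auto
  then show ?thesis
    using the_block_eq[OF assms] by (simp add: labelling_word_def)
qed

lemma word_block_labelling_word:
  assumes C: "partition_on {1..N} C" and g: "inj_on g C" and B: "B \<in> C"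
  shows "word_block (labelling_word N C g) (g B) = B"
proof (intro equalityI subsetI)
  fix i
  assume i: "i \<in> word_block (labelling_word N C g) (g B)"
  then have "i \<in> {1..N}"
    by (simp add: word_block_def)
  then obtain B' where B': "B' \<in> C" "i \<in> B'"
    using partition_onD1[OF C] by blast
  then have "g B' = g B"
    using i nth_labelling_word[OF C] by (auto simp: word_block_def)
  then show "i \<in> B"
    using B B' g by (auto dest: inj_onD)
next
  fix i
  assume "i \<in> B"
  then show "i \<in> word_block (labelling_word N C g) (g B)"
    using partition_onD1[OF C] B nth_labelling_word[OF C B] by (auto simp: word_block_def)
qed

lemma labelling_word_in_words_with_partition:
  assumes C: "partition_on {1..N} C" and g: "g \<in> C \<rightarrow>\<^sub>E {..<L}" "inj_on g C"
  shows "labelling_word N C g \<in> words_with_partition L N C"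
proof -
  let ?ys = "labelling_word N C g"
  have "?ys ! j < L" if "j < N" for j
  proof -
    have "Suc j \<in> {1..N}"
      using that by simp
    then obtain B where B: "B \<in> C" "Suc j \<in> B"
      using partition_onD1[OF C] by blast
    then show ?thesis
      using nth_labelling_word[OF C B] g(1) by auto
  qed
  then have "set ?ys \<subseteq> {..<L}"
    by (auto simp: in_set_conv_nth)
  moreover have "word_partition L ?ys = C"
  proof (intro equalityI subsetI)
    fix A
    assume "A \<in> word_partition L ?ys"
    then obtain l i where A: "A = word_block ?ys l" "i \<in> A"
      by (auto simp: word_partition_eq)
    then have "i \<in> {1..N}"
      by (simp add: word_block_def)
    then obtain B where B: "B \<in> C" "i \<in> B"
      using partition_onD1[OF C] by blast
    then have "l = g B"
      using A nth_labelling_word[OF C B] by (auto simp: word_block_def)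
    then show "A \<in> C"
      using A B word_block_labelling_word[OF C g(2)] by simp
  next
    fix B
    assume "B \<in> C"
    then show "B \<in> word_partition L ?ys"
      using word_block_labelling_word[OF C g(2)] g(1) partition_onD3[OF C]
      unfolding word_partition_eq by blast
  qed
  ultimately show ?thesis
    by (simp add: words_with_partition_def)
qed

lemma block_labels_labelling_word:
  assumes C: "partition_on {1..N} C" and g: "g \<in> C \<rightarrow>\<^sub>E {..<L}"
  shows "block_labels (labelling_word N C g) C = g"
proof
  fix B
  show "block_labels (labelling_word N C g) C B = g B"
  proof (cases "B \<in> C")
    case True
    have "finite B" "B \<noteq> {}"
      using True partition_onD1[OF C] partition_onD3[OF C] by (auto intro: finite_subset)
    then have "Min B \<in> B"
      by (rule Min_in)
    then show ?thesis
      using True nth_labelling_word[OF C True] by (simp add: block_labels_def)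
  qed (use g in \<open>auto simp: block_labels_def\<close>)
qed

lemma card_words_with_partition:
  assumes C: "partition_on {1..N} C"
  shows "card (words_with_partition L N C) = (\<Prod>i<card C. L - i)"
proof -
  have "finite C"
    using C finite_elements by blast
  have "(\<lambda>ys. block_labels ys C) ` words_with_partition L N C = {g \<in> C \<rightarrow>\<^sub>E {..<L}. inj_on g C}"
  proof (intro equalityI subsetI)
    fix g
    assume "g \<in> {g \<in> C \<rightarrow>\<^sub>E {..<L}. inj_on g C}"
    then show "g \<in> (\<lambda>ys. block_labels ys C) ` words_with_partition L N C"
      using labelling_word_in_words_with_partition[OF C] block_labels_labelling_word[OF C]
      by (auto intro!: rev_image_eqI)
  qed (use block_labels_injective in blast)
  then have "card (words_with_partition L N C) = card {g \<in> C \<rightarrow>\<^sub>E {..<L}. inj_on g C}"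
    using card_image[OF inj_on_block_labels[OF C, of L]] by simp
  also have "\<dots> = (\<Prod>i<card C. L - i)"
    using card_inj_on_subset_funcset[OF \<open>finite C\<close>, of "{..<L}" C] \<open>finite C\<close>
    by (simp add: atLeast0LessThan)
  finally show ?thesis .
qed

lemma real_prod_lessThan_diff:
  "real (\<Prod>i<K. L - i) = (if K \<le> L then fact L / fact (L - K) else 0)"
proof (cases "K \<le> L")
  case True
  then have "real (\<Prod>i<K. L - i) = (\<Prod>i<K. real L - real i)"
    by (simp add: of_nat_diff)
  also have "\<dots> = fact K * (real L gchoose K)"
    by (simp add: gbinomial_mult_fact atLeast0LessThan)
  also have "\<dots> = fact L / fact (L - K)"
    using True by (simp flip: binomial_gbinomial add: fact_binomial)
  finally show ?thesis
    using True by simp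
next
  case False
  then have "(\<Prod>i<K. L - i) = 0"
    by (intro prod_zero) auto
  then show ?thesis
    using False by simp
qed

section \<open>Gamma integrals\<close>

definition gamma_kernel :: "real \<Rightarrow> real \<Rightarrow> real \<Rightarrow> real" where
  "gamma_kernel s b w = (if 0 < w then w powr (s - 1) * exp (- b * w) else 0)"

lemma gamma_kernel_measurable [measurable]: "gamma_kernel s b \<in> borel_measurable borel"
  unfolding gamma_kernel_def by measurable

lemma gamma_kernel_nonneg: "0 \<le> gamma_kernel s b w"
  by (simp add: gamma_kernel_def)

lemma nn_integral_gamma_kernel:
  assumes s: "0 < s" and b: "0 < b"
  shows "(\<integral>\<^sup>+ w. gamma_kernel s b w \<partial>lborel) = ennreal (Gamma s / b powr s)"
proof -
  have "((\<lambda>t. t powr (s - 1) / exp t) has_integral Gamma s) {0..}"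
    using s by (rule Gamma_integral_real)
  then have "(\<integral>\<^sup>+ t. ennreal (t powr (s - 1) / exp t) * indicator {0..} t \<partial>lborel) = ennreal (Gamma s)"
    by (intro nn_integral_has_integral_lebesgue') auto
  moreover have "ennreal (t powr (s - 1) / exp t) * indicator {0..} t = gamma_kernel s 1 t" for t :: real
    by (cases "t > 0"; cases "t = 0") (auto simp: gamma_kernel_def indicator_def exp_minus field_simps)
  ultimately have "ennreal (Gamma s) = (\<integral>\<^sup>+ t. gamma_kernel s 1 t \<partial>lborel)"
    by simp
  also have "\<dots> = ennreal b * (\<integral>\<^sup>+ w. gamma_kernel s 1 (0 + b * w) \<partial>lborel)"
    using b by (subst nn_integral_real_affine[where c = b and t = 0]) auto
  also have "(\<lambda>w. ennreal (gamma_kernel s 1 (0 + b * w))) = (\<lambda>w. ennreal (b powr (s - 1)) * gamma_kernel s b w)"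
    using b by (auto simp: gamma_kernel_def powr_mult zero_less_mult_iff ennreal_mult[symmetric] fun_eq_iff)
  also have "(\<integral>\<^sup>+ w. ennreal (b powr (s - 1)) * gamma_kernel s b w \<partial>lborel)
      = ennreal (b powr (s - 1)) * (\<integral>\<^sup>+ w. gamma_kernel s b w \<partial>lborel)"
    by (rule nn_integral_cmult) measurable
  finally have "ennreal (Gamma s) = ennreal b * (ennreal (b powr (s - 1)) * (\<integral>\<^sup>+ w. gamma_kernel s b w \<partial>lborel))" .
  also have "\<dots> = ennreal (b * b powr (s - 1)) * (\<integral>\<^sup>+ w. gamma_kernel s b w \<partial>lborel)"
    using b by (simp add: ennreal_mult mult.assoc)
  also have "b * b powr (s - 1) = b powr s"
    using b by (simp add: powr_diff)
  finally have Gamma_eq: "ennreal (Gamma s) = ennreal (b powr s) * (\<integral>\<^sup>+ w. gamma_kernel s b w \<partial>lborel)" .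
  have "(\<integral>\<^sup>+ w. gamma_kernel s b w \<partial>lborel)
      = ennreal (1 / b powr s) * (ennreal (b powr s) * (\<integral>\<^sup>+ w. gamma_kernel s b w \<partial>lborel))"
    using b by (simp add: mult.assoc[symmetric] ennreal_mult[symmetric])
  also have "\<dots> = ennreal (Gamma s / b powr s)"
    unfolding Gamma_eq[symmetric] using b s by (simp add: ennreal_mult[symmetric] Gamma_real_pos less_imp_le)
  finally show ?thesis .
qed

lemma gamma_dens_measurable [measurable]: "gamma_dens a b \<in> borel_measurable borel"
  unfolding gamma_dens_def by measurable

lemma gamma_dens_nonneg: "0 < a \<Longrightarrow> 0 \<le> gamma_dens a b w"
  using Gamma_real_pos[of a] by (simp add: gamma_dens_def)

lemma gamma_dens_mult_exp_power:
  "gamma_dens a b w * (exp (- t * w) * w ^ k) = b powr a / Gamma a * gamma_kernel (real k + a) (b + t) w"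
proof (cases "0 < w")
  case True
  have "gamma_dens a b w * (exp (- t * w) * w ^ k)
      = b powr a / Gamma a * ((w powr (a - 1) * w ^ k) * (exp (- b * w) * exp (- t * w)))"
    using True by (simp add: gamma_dens_def mult_ac)
  also have "w powr (a - 1) * w ^ k = w powr (real k + a - 1)"
    using True by (simp add: powr_realpow[symmetric] powr_add[symmetric] algebra_simps)
  also have "exp (- b * w) * exp (- t * w) = exp (- (b + t) * w)"
    by (simp add: exp_add[symmetric] algebra_simps)
  finally show ?thesis
    using True by (simp add: gamma_kernel_def)
qed (simp add: gamma_dens_def gamma_kernel_def)

lemma nn_integral_gamma_dens_exp_power:
  assumes a: "0 < a" and b: "0 < b" and t: "0 \<le> t"
  shows "(\<integral>\<^sup>+ w. gamma_dens a b w * (exp (- t * w) * w ^ k) \<partial>lborel)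
       = ennreal (b powr a / Gamma a * (Gamma (real k + a) / (b + t) powr (real k + a)))"
proof -
  have "(\<integral>\<^sup>+ w. gamma_dens a b w * (exp (- t * w) * w ^ k) \<partial>lborel)
      = (\<integral>\<^sup>+ w. ennreal (b powr a / Gamma a) * gamma_kernel (real k + a) (b + t) w \<partial>lborel)"
    unfolding gamma_dens_mult_exp_power using Gamma_real_pos[OF a]
    by (intro nn_integral_cong ennreal_mult) (auto simp: gamma_kernel_nonneg)
  also have "\<dots> = ennreal (b powr a / Gamma a) * (\<integral>\<^sup>+ w. gamma_kernel (real k + a) (b + t) w \<partial>lborel)"
    by (rule nn_integral_cmult) measurable
  also have "\<dots> = ennreal (b powr a / Gamma a) * ennreal (Gamma (real k + a) / (b + t) powr (real k + a))"
    using a b t by (simp add: nn_integral_gamma_kernel)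
  also have "\<dots> = ennreal (b powr a / Gamma a * (Gamma (real k + a) / (b + t) powr (real k + a)))"
    using a by (intro ennreal_mult[symmetric]) auto
  finally show ?thesis .
qed

lemma nn_integral_gamma_dens:
  assumes a: "0 < a" and b: "0 < b"
  shows "(\<integral>\<^sup>+ w. gamma_dens a b w \<partial>lborel) = 1"
  using nn_integral_gamma_dens_exp_power[OF a b, of 0 0] Gamma_real_pos[OF a] b by simp

definition gamma_poisson_moment :: "real \<Rightarrow> real \<Rightarrow> nat \<Rightarrow> real" where
  "gamma_poisson_moment a b k = (b / (1 + b)) powr a * (1 / (1 + b)) ^ k * (Gamma (real k + a) / Gamma a)"

lemma nn_integral_gamma_dens_poisson_kernel:
  assumes a: "0 < a" and b: "0 < b"
  shows "(\<integral>\<^sup>+ w. gamma_dens a b w * poisson_kernel k w \<partial>lborel) = ennreal (gamma_poisson_moment a b k)"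
proof -
  have "(\<integral>\<^sup>+ w. gamma_dens a b w * poisson_kernel k w \<partial>lborel)
      = (\<integral>\<^sup>+ w. gamma_dens a b w * (exp (- 1 * w) * w ^ k) \<partial>lborel)"
    by (intro nn_integral_cong) (simp add: gamma_dens_def poisson_kernel_def)
  also have "\<dots> = ennreal (b powr a / Gamma a * (Gamma (real k + a) / (b + 1) powr (real k + a)))"
    by (rule nn_integral_gamma_dens_exp_power[OF a b]) simp
  also have "b powr a / Gamma a * (Gamma (real k + a) / (b + 1) powr (real k + a)) = gamma_poisson_moment a b k"
    using b by (simp add: gamma_poisson_moment_def powr_add powr_divide powr_realpow[symmetric] field_simps)
  finally show ?thesis .
qed

lemma prod_gamma_poisson_moment_words:
  assumes ys: "ys \<in> words_with_partition L N C" and a: "0 < a" and b: "0 < b"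
  shows "(\<Prod>l<L. gamma_poisson_moment a b (count (mset ys) l))
       = (b / (1 + b)) powr (real L * a) * (1 / (1 + b)) ^ N * (\<Prod>B\<in>C. Gamma (real (card B) + a) / Gamma a)"
proof -
  have "(\<Prod>l<L. gamma_poisson_moment a b (count (mset ys) l))
      = (\<Prod>l<L. (b / (1 + b)) powr a) * (\<Prod>l<L. (1 / (1 + b)) ^ count (mset ys) l)
        * (\<Prod>l<L. Gamma (real (count (mset ys) l) + a) / Gamma a)"
    by (simp only: gamma_poisson_moment_def prod.distrib)
  also have "(\<Prod>l<L. (b / (1 + b)) powr a) = (b / (1 + b)) powr (real L * a)"
    using b by (simp add: powr_realpow[symmetric] powr_powr mult.commute)
  also have "(\<Prod>l<L. (1 / (1 + b)) ^ count (mset ys) l) = (1 / (1 + b)) ^ N"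
    using sum_count_words_with_partition[OF ys] by (simp add: power_sum[symmetric])
  also have "(\<Prod>l<L. Gamma (real (count (mset ys) l) + a) / Gamma a) = (\<Prod>B\<in>C. Gamma (real (card B) + a) / Gamma a)"
    using prod_count_words_with_partition[OF ys, of "\<lambda>k. Gamma (real k + a) / Gamma a"] Gamma_real_pos[OF a]
    by simp
  finally show ?thesis .
qed

section \<open>The latent measure\<close>

lemma nn_integral_pair_measure_separate:
  fixes g :: "'b \<Rightarrow> ennreal" and p :: "'a \<Rightarrow> 'c \<Rightarrow> ennreal"
  assumes B: "sigma_finite_measure B" and T: "sigma_finite_measure T"
    and g [measurable]: "g \<in> borel_measurable B"
    and p [measurable]: "case_prod p \<in> borel_measurable (A \<Otimes>\<^sub>M T)"
  shows "(\<integral>\<^sup>+ z. g (fst (snd z)) * p (fst z) (snd (snd z)) \<partial>(A \<Otimes>\<^sub>M (B \<Otimes>\<^sub>M T)))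
       = (\<integral>\<^sup>+ w. g w \<partial>B) * (\<integral>\<^sup>+ z. p (fst z) (snd z) \<partial>(A \<Otimes>\<^sub>M T))"
proof -
  interpret T: sigma_finite_measure T by (rule T)
  interpret BT: sigma_finite_measure "B \<Otimes>\<^sub>M T"
    using B T by (rule sigma_finite_pair_measure)
  have p_slice [measurable]: "p m \<in> borel_measurable T" if "m \<in> space A" for m
    using measurable_Pair2[OF p that] by simp
  have "(\<integral>\<^sup>+ z. g (fst (snd z)) * p (fst z) (snd (snd z)) \<partial>(A \<Otimes>\<^sub>M (B \<Otimes>\<^sub>M T)))
      = (\<integral>\<^sup>+ m. \<integral>\<^sup>+ y. g (fst y) * p m (snd y) \<partial>(B \<Otimes>\<^sub>M T) \<partial>A)"
    by (subst BT.nn_integral_fst[symmetric]) simp_all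
  also have "\<dots> = (\<integral>\<^sup>+ m. (\<integral>\<^sup>+ w. g w \<partial>B) * (\<integral>\<^sup>+ \<theta>. p m \<theta> \<partial>T) \<partial>A)"
  proof (rule nn_integral_cong)
    fix m
    assume m: "m \<in> space A"
    have "(\<integral>\<^sup>+ y. g (fst y) * p m (snd y) \<partial>(B \<Otimes>\<^sub>M T)) = (\<integral>\<^sup>+ w. \<integral>\<^sup>+ \<theta>. g w * p m \<theta> \<partial>T \<partial>B)"
      using m by (subst T.nn_integral_fst[symmetric]) simp_all
    also have "\<dots> = (\<integral>\<^sup>+ w. g w * (\<integral>\<^sup>+ \<theta>. p m \<theta> \<partial>T) \<partial>B)"
      using m by (simp add: nn_integral_cmult)
    also have "\<dots> = (\<integral>\<^sup>+ w. g w \<partial>B) * (\<integral>\<^sup>+ \<theta>. p m \<theta> \<partial>T)"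
      by (simp add: nn_integral_multc)
    finally show "(\<integral>\<^sup>+ y. g (fst y) * p m (snd y) \<partial>(B \<Otimes>\<^sub>M T)) = (\<integral>\<^sup>+ w. g w \<partial>B) * (\<integral>\<^sup>+ \<theta>. p m \<theta> \<partial>T)" .
  qed
  also have "\<dots> = (\<integral>\<^sup>+ w. g w \<partial>B) * (\<integral>\<^sup>+ m. \<integral>\<^sup>+ \<theta>. p m \<theta> \<partial>T \<partial>A)"
    by (rule nn_integral_cmult) measurable
  also have "(\<integral>\<^sup>+ m. \<integral>\<^sup>+ \<theta>. p m \<theta> \<partial>T \<partial>A) = (\<integral>\<^sup>+ z. p (fst z) (snd z) \<partial>(A \<Otimes>\<^sub>M T))"
    by (subst T.nn_integral_fst[symmetric]) simp_all
  finally show ?thesis .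
qed

locale gamma_latent =
  fixes X :: "'a::euclidean_space set" and M\<Theta> :: "'t measure"
    and \<alpha> \<beta> :: real and pmt :: "'a \<Rightarrow> 't \<Rightarrow> real"
  assumes X_borel: "X \<in> sets borel"
    and sigma_finite_\<Theta>: "sigma_finite_measure M\<Theta>"
    and pmt_measurable: "case_prod pmt \<in> borel_measurable (restrict_space lborel X \<Otimes>\<^sub>M M\<Theta>)"
    and pmt_nonneg: "\<And>m \<theta>. 0 \<le> pmt m \<theta>"
    and pmt_normalised: "(\<integral>\<^sup>+ (m, \<theta>). ennreal (pmt m \<theta>) \<partial>(restrict_space lborel X \<Otimes>\<^sub>M M\<Theta>)) = 1"
    and alpha_pos: "0 < \<alpha>" and beta_pos: "0 < \<beta>"
begin

abbreviation lat :: "('a \<times> real \<times> 't) measure" where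
  "lat \<equiv> latent_measure X M\<Theta> \<alpha> \<beta> pmt"

lemma space_lat: "space lat = X \<times> UNIV \<times> space M\<Theta>"
  by (simp add: latent_measure_def space_pair_measure space_restrict_space)

lemma weight_measurable_lat [measurable]: "(\<lambda>z. fst (snd z)) \<in> borel_measurable lat"
  unfolding latent_measure_def measurable_density_eq1 by measurable

lemma nn_integral_lat_weight:
  fixes h :: "real \<Rightarrow> ennreal"
  assumes [measurable]: "h \<in> borel_measurable borel"
  shows "(\<integral>\<^sup>+ z. h (fst (snd z)) \<partial>lat) = (\<integral>\<^sup>+ w. gamma_dens \<alpha> \<beta> w * h w \<partial>lborel)"
proof -
  have [measurable]: "(\<lambda>(m, \<theta>). ennreal (pmt m \<theta>)) \<in> borel_measurable (restrict_space lborel X \<Otimes>\<^sub>M M\<Theta>)"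
    using pmt_measurable by measurable
  have "(\<integral>\<^sup>+ z. h (fst (snd z)) \<partial>lat)
      = (\<integral>\<^sup>+ z. (gamma_dens \<alpha> \<beta> (fst (snd z)) * h (fst (snd z))) * ennreal (pmt (fst z) (snd (snd z)))
           \<partial>(restrict_space lborel X \<Otimes>\<^sub>M (lborel \<Otimes>\<^sub>M M\<Theta>)))"
    unfolding latent_measure_def using pmt_measurable
    by (subst nn_integral_density)
       (auto simp: case_prod_beta' ennreal_mult gamma_dens_nonneg alpha_pos pmt_nonneg mult_ac intro!: nn_integral_cong)
  also have "\<dots> = (\<integral>\<^sup>+ w. gamma_dens \<alpha> \<beta> w * h w \<partial>lborel)"
    using nn_integral_pair_measure_separate[OF sigma_finite_lborel sigma_finite_\<Theta>,
        of "\<lambda>w. gamma_dens \<alpha> \<beta> w * h w" "\<lambda>m \<theta>. ennreal (pmt m \<theta>)" "restrict_space lborel X"]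
      pmt_normalised by (simp add: case_prod_beta')
  finally show ?thesis .
qed

lemma prob_space_lat: "prob_space lat"
proof
  have "emeasure lat (space lat) = (\<integral>\<^sup>+ z. 1 \<partial>lat)"
    by simp
  also have "\<dots> = 1"
    using nn_integral_lat_weight[of "\<lambda>_. 1"] nn_integral_gamma_dens[OF alpha_pos beta_pos] by simp
  finally show "emeasure lat (space lat) = 1" .
qed

lemma integrable_lat_poisson_kernel: "integrable lat (\<lambda>z. poisson_kernel k (fst (snd z)))"
  and integral_lat_poisson_kernel:
    "(\<integral>z. poisson_kernel k (fst (snd z)) \<partial>lat) = gamma_poisson_moment \<alpha> \<beta> k"
proof -
  have nn: "(\<integral>\<^sup>+ z. poisson_kernel k (fst (snd z)) \<partial>lat) = ennreal (gamma_poisson_moment \<alpha> \<beta> k)"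
  proof -
    have "(\<integral>\<^sup>+ z. poisson_kernel k (fst (snd z)) \<partial>lat)
        = (\<integral>\<^sup>+ w. gamma_dens \<alpha> \<beta> w * poisson_kernel k w \<partial>lborel)"
      using nn_integral_lat_weight[of "\<lambda>w. ennreal (poisson_kernel k w)"]
      by (simp add: ennreal_mult gamma_dens_nonneg alpha_pos poisson_kernel_nonneg)
    then show ?thesis
      by (simp add: nn_integral_gamma_dens_poisson_kernel alpha_pos beta_pos)
  qed
  show "integrable lat (\<lambda>z. poisson_kernel k (fst (snd z)))"
    using nn by (intro integrableI_nonneg) (auto simp: poisson_kernel_nonneg)
  have "0 \<le> gamma_poisson_moment \<alpha> \<beta> k"
    using alpha_pos beta_pos by (simp add: gamma_poisson_moment_def less_imp_le)
  then show "(\<integral>z. poisson_kernel k (fst (snd z)) \<partial>lat) = gamma_poisson_moment \<alpha> \<beta> k"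
    using nn by (subst integral_eq_nn_integral) (auto simp: poisson_kernel_nonneg)
qed

lemma integral_prod_poisson_kernel:
  fixes L :: nat and k :: "nat \<Rightarrow> nat"
  shows "integrable (PiM {..<L} (\<lambda>_. lat)) (\<lambda>z. \<Prod>l<L. poisson_kernel (k l) (fst (snd (z l))))"
    "(\<integral>z. (\<Prod>l<L. poisson_kernel (k l) (fst (snd (z l)))) \<partial>PiM {..<L} (\<lambda>_. lat))
       = (\<Prod>l<L. gamma_poisson_moment \<alpha> \<beta> (k l))"
proof -
  interpret lat: prob_space lat
    by (rule prob_space_lat)
  interpret product_sigma_finite "\<lambda>_. lat"
    by (simp add: product_sigma_finite_def lat.sigma_finite_measure_axioms)
  show "integrable (PiM {..<L} (\<lambda>_. lat)) (\<lambda>z. \<Prod>l<L. poisson_kernel (k l) (fst (snd (z l))))"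
    "(\<integral>z. (\<Prod>l<L. poisson_kernel (k l) (fst (snd (z l)))) \<partial>PiM {..<L} (\<lambda>_. lat))
      = (\<Prod>l<L. gamma_poisson_moment \<alpha> \<beta> (k l))"
    using product_integrable_prod[of "{..<L}" "\<lambda>l z. poisson_kernel (k l) (fst (snd z))"]
      product_integral_prod[of "{..<L}" "\<lambda>l z. poisson_kernel (k l) (fst (snd z))"]
    by (simp_all add: integrable_lat_poisson_kernel integral_lat_poisson_kernel)
qed

lemma integral_pmf_NC_given_latent:
  assumes I: "\<And>m \<theta>. m \<in> X \<Longrightarrow> \<theta> \<in> space M\<Theta> \<Longrightarrow> I m \<theta> = 1"
    and C: "partition_on {1..N} C"
  shows "(\<integral>z. pmf (NC_given_latent L (\<lambda>l. fst (snd (z l))) (\<lambda>l. I (fst (z l)) (snd (snd (z l))))) (N, C)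
            \<partial>PiM {..<L} (\<lambda>_. lat))
       = (if card C \<le> L then fact L / fact (L - card C) else 0) * (\<beta> / (1 + \<beta>)) powr (real L * \<alpha>)
         * ((1 / (1 + \<beta>)) ^ N * (\<Prod>B\<in>C. Gamma (real (card B) + \<alpha>) / Gamma \<alpha>) / fact N)"
proof -
  let ?P = "PiM {..<L} (\<lambda>_. lat)"
  let ?W = "words_with_partition L N C"
  let ?K = "\<lambda>ys z. \<Prod>l<L. poisson_kernel (count (mset ys) l) (fst (snd (z l)))"
  have "pmf (NC_given_latent L (\<lambda>l. fst (snd (z l))) (\<lambda>l. I (fst (z l)) (snd (snd (z l))))) (N, C)
      = (\<Sum>ys\<in>?W. ?K ys z) / fact N" if "z \<in> space ?P" for z
  proof (rule pmf_NC_given_latent_unit_mass)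
    fix l
    assume "l < L"
    then have "z l \<in> X \<times> UNIV \<times> space M\<Theta>"
      using that by (auto simp: space_PiM space_lat)
    then show "I (fst (z l)) (snd (snd (z l))) = 1"
      by (intro I) (auto simp: mem_Times_iff)
  qed
  then have "(\<integral>z. pmf (NC_given_latent L (\<lambda>l. fst (snd (z l))) (\<lambda>l. I (fst (z l)) (snd (snd (z l))))) (N, C) \<partial>?P)
      = (\<Sum>ys\<in>?W. \<Prod>l<L. gamma_poisson_moment \<alpha> \<beta> (count (mset ys) l)) / fact N"
    by (simp add: Bochner_Integration.integral_cong[OF refl] integral_prod_poisson_kernel)
  also have "\<dots> = card ?W * ((\<beta> / (1 + \<beta>)) powr (real L * \<alpha>) * (1 / (1 + \<beta>)) ^ N
      * (\<Prod>B\<in>C. Gamma (real (card B) + \<alpha>) / Gamma \<alpha>)) / fact N"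
    using prod_gamma_poisson_moment_words alpha_pos beta_pos by simp
  finally show ?thesis
    using card_words_with_partition[OF C] real_prod_lessThan_diff[where K = "card C" and L = L]
    by (simp add: mult_ac)
qed

end

lemma summable_Po_falling_factorial:
  assumes c: "\<And>L. \<bar>c L\<bar> \<le> 1"
  shows "summable (\<lambda>L. if K \<le> L then Po L \<mu> * (fact L / fact (L - K)) * c L else 0)"
proof (rule summable_comparison_test')
  define g where "g L = (if K \<le> L then exp (- \<mu>) * \<bar>\<mu>\<bar> ^ L / fact (L - K) else 0)" for L
  have "summable (\<lambda>L. exp (- \<mu>) * \<bar>\<mu>\<bar> ^ K * (inverse (fact L) * \<bar>\<mu>\<bar> ^ L))"
    by (intro summable_mult summable_exp)
  moreover have "g (L + K) = exp (- \<mu>) * \<bar>\<mu>\<bar> ^ K * (inverse (fact L) * \<bar>\<mu>\<bar> ^ L)" for L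
    by (simp add: g_def power_add field_simps)
  ultimately have "summable (\<lambda>L. g (L + K))"
    by simp
  then show "summable g"
    by (rule summable_iff_shift[THEN iffD1])
  fix L
  have "\<bar>Po L \<mu> * (fact L / fact (L - K)) * c L\<bar> = exp (- \<mu>) * \<bar>\<mu>\<bar> ^ L / fact (L - K) * \<bar>c L\<bar>"
    by (simp add: Po_def abs_mult power_abs)
  also have "\<dots> \<le> exp (- \<mu>) * \<bar>\<mu>\<bar> ^ L / fact (L - K)"
    using c[of L] by (intro mult_left_le) auto
  finally show "norm (if K \<le> L then Po L \<mu> * (fact L / fact (L - K)) * c L else 0) \<le> g L"
    by (simp add: g_def)
qed

theorem theorem1:
  fixes X :: "'a::euclidean_space set"
    and MY :: "'y measure" and M\<Theta> :: "'t measure"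
    and Lbar \<alpha> \<beta> :: real
    and pmt :: "'a \<Rightarrow> 't \<Rightarrow> real"
    and pxy :: "'a \<times> 'y \<Rightarrow> 'a \<Rightarrow> 't \<Rightarrow> real"
    and N :: nat and C :: "nat set set"
  assumes "compact X"
    and "0 < Lbar" and "0 < \<alpha>" and "0 < \<beta>"
    and "sigma_finite_measure MY" and "sigma_finite_measure M\<Theta>"
    and "case_prod pmt \<in> borel_measurable (restrict_space lborel X \<Otimes>\<^sub>M M\<Theta>)"
    and "\<And>m \<theta>. 0 \<le> pmt m \<theta>"
    and "(\<integral>\<^sup>+ (m, \<theta>). ennreal (pmt m \<theta>) \<partial>(restrict_space lborel X \<Otimes>\<^sub>M M\<Theta>)) = 1"
    and "(\<lambda>(xy, m, \<theta>). pxy xy m \<theta>)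
           \<in> borel_measurable ((restrict_space lborel X \<Otimes>\<^sub>M MY) \<Otimes>\<^sub>M (restrict_space lborel X \<Otimes>\<^sub>M M\<Theta>))"
    and "\<And>xy m \<theta>. 0 \<le> pxy xy m \<theta>"
    and "\<And>m \<theta>. m \<in> X \<Longrightarrow> \<theta> \<in> space M\<Theta> \<Longrightarrow>
           (\<integral>\<^sup>+ xy. ennreal (pxy xy m \<theta>) \<partial>(restrict_space lborel X \<Otimes>\<^sub>M MY)) = 1"
    and "partition_on {1..N} C"
  shows "NS_prob X MY M\<Theta> Lbar \<alpha> \<beta> pmt pxy N C =
    (1 / fact N) * (1 / (1 + \<beta>)) ^ N *
      (\<Sum>L. if card C \<le> L
            then Po L Lbar * (fact L / fact (L - card C)) * (\<beta> / (1 + \<beta>)) powr (real L * \<alpha>)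
            else 0)
    * (\<Prod>B\<in>C. Gamma (real (card B) + \<alpha>) / Gamma \<alpha>)"
proof -
  have "X \<in> sets borel"
    using assms(1) by (intro borel_closed compact_imp_closed)
  then interpret gamma_latent X M\<Theta> \<alpha> \<beta> pmt
    by (rule gamma_latent.intro) (fact assms)+
  \<comment> \<open>Only the normalisation of the child densities enters: the children masses are 1 on the
    support of the latent measure.\<close>
  define mass where
    "mass m \<theta> = enn2real (\<integral>\<^sup>+ xy. ennreal (pxy xy m \<theta>) \<partial>(restrict_space lborel X \<Otimes>\<^sub>M MY))" for m \<theta>
  define f where
    "f L = (if card C \<le> L
            then Po L Lbar * (fact L / fact (L - card C)) * (\<beta> / (1 + \<beta>)) powr (real L * \<alpha>)
            else 0)" for L
  define T where "T = (1 / (1 + \<beta>)) ^ N * (\<Prod>B\<in>C. Gamma (real (card B) + \<alpha>) / Gamma \<alpha>) / fact N"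
  have "Po L Lbar * (\<integral>z. pmf (NC_given_latent L (\<lambda>l. fst (snd (z l))) (\<lambda>l. mass (fst (z l)) (snd (snd (z l)))))
            (N, C) \<partial>PiM {..<L} (\<lambda>_. lat)) = f L * T" for L
    by (subst integral_pmf_NC_given_latent[OF _ assms(13)]) (simp_all add: mass_def assms(12) f_def T_def)
  then have "NS_prob X MY M\<Theta> Lbar \<alpha> \<beta> pmt pxy N C = (\<Sum>L. f L * T)"
    unfolding NS_prob_def mass_def by simp
  also have "\<dots> = (\<Sum>L. f L) * T"
    using assms(3,4) unfolding f_def
    by (intro suminf_mult2[symmetric] summable_Po_falling_factorial) (auto intro!: powr_le1)
  finally show ?thesis
    by (simp add: f_def T_def)
qed

end
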